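(* System 3 has exactly four fixed points, the double poles $p_{\varepsilon_1,\varepsilon_2}=((0,0,\varepsilon_11),(0,0,\varepsilon_21))$, $\varepsilon_1,\varepsilon_2\in\{+,-\}$. The fixed points $p_{+,+}$, $p_{+,-}$ and $p_{-,+}$ are non-degenerate of elliptic-elliptic type for all $t\in[0,1]$, while $p_{-,-}$ is non-degenerate of elliptic-elliptic type if $t<t^-$ or $t>t^+$, non-degenerate of focus-focus type if $t^-<t<t^+$, and degenerate if $t\in\{t^-,t^+\}$, where $$t^\pm=\frac{R_2}{2R_2+R_1\mp2\sqrt{R_1R_2}}.$$
   Context: Let $0<R_1<R_2$ and $t\in[0,1]$. On $M=S^2\times S^2$ with Cartesian coordinates $(x_i,y_i,z_i)$, $x_i^2+y_i^2+z_i^2=1$, and cylindrical coordinates $(\theta_i,z_i)$, $\theta_i=\arg(x_i+iy_i)$, System 3 is the $b$-integrable system with $Z=\{z_2=0\}$, $b$-symplectic form $\omega=R_1\,dz_1\wedge d\theta_1+R_2\frac{dz_2}{z_2}\wedge d\theta_2$ (in the local chart $(x_1,y_1,x_2,y_2)$ on $\{\varepsilon_1z_1>0,\varepsilon_2z_2>0\}$: $\omega=-\varepsilon_1\frac{R_1}{\sqrt{1-x_1^2-y_1^2}}dx_1\wedge dy_1-\frac{R_2}{1-x_2^2-y_2^2}dx_2\wedge dy_2$), and $L=R_1z_1+R_2\log|z_2|$, $H=(1-t)z_1+t(x_1x_2+y_1y_2+z_1z_2)$. A fixed point is a point where $dL=dH=0$. A fixed point $p$ with $\Omega$ the matrix of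 $\omega$ at $p$ is non-degenerate if $A_L=\Omega^{-1}d^2L(p)$, $A_H=\Omega^{-1}d^2H(p)$ span a Cartan subalgebra of $\mathfrak{sp}(4,\mathbb R)$; it is elliptic-elliptic if some combination $c_1A_L+c_2A_H$ has four distinct eigenvalues $\pm i\alpha,\pm i\beta$ ($\alpha\ne\beta$ nonzero reals) and focus-focus if such a combination has eigenvalues $\pm\alpha\pm i\beta$ with $\alpha,\beta$ nonzero reals. *)

theory Defs
  imports "HOL-Analysis.Analysis"
begin

text \<open>Points of M = S^2 x S^2 are pairs of unit vectors in R^3; coordinates
  (x,y,z) = (v$1, v$2, v$3).\<close>

type_synonym pt = "(real^3) \<times> (real^3)"

definition S2 :: "(real^3) set" where
  "S2 = {v. norm v = 1}"

definition M :: "pt set" where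
  "M = S2 \<times> S2"

definition tangent :: "pt \<Rightarrow> pt set" where
  "tangent p = {(a, b). a \<bullet> fst p = 0 \<and> b \<bullet> snd p = 0}"

definition Lfun :: "real \<Rightarrow> real \<Rightarrow> pt \<Rightarrow> real" where
  "Lfun R1 R2 q = R1 * (fst q $ 3) + R2 * ln \<bar>snd q $ 3\<bar>"

definition Hfun :: "real \<Rightarrow> pt \<Rightarrow> real" where
  "Hfun t q = (1 - t) * (fst q $ 3)
     + t * (fst q $ 1 * snd q $ 1 + fst q $ 2 * snd q $ 2 + fst q $ 3 * snd q $ 3)"

definition critical_on_M :: "(pt \<Rightarrow> real) \<Rightarrow> pt \<Rightarrow> bool" where
  "critical_on_M f p \<longleftrightarrow> (\<exists>D. (f has_derivative D) (at p) \<and> (\<forall>v\<in>tangent p. D v = 0))"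

text \<open>Fixed points of System 3: points of M \ Z with dL = dH = 0.\<close>

definition fixed_point :: "real \<Rightarrow> real \<Rightarrow> real \<Rightarrow> pt \<Rightarrow> bool" where
  "fixed_point R1 R2 t p \<longleftrightarrow> p \<in> M \<and> snd p $ 3 \<noteq> 0
      \<and> critical_on_M (Lfun R1 R2) p \<and> critical_on_M (Hfun t) p"

definition pole :: "real \<Rightarrow> real \<Rightarrow> pt" where
  "pole e1 e2 = (vector [0, 0, e1], vector [0, 0, e2])"

definition chart :: "real \<Rightarrow> real \<Rightarrow> real^4 \<Rightarrow> pt" where
  "chart e1 e2 u =
     (vector [u$1, u$2, e1 * sqrt (1 - (u$1)\<^sup>2 - (u$2)\<^sup>2)],
      vector [u$3, u$4, e2 * sqrt (1 - (u$3)\<^sup>2 - (u$4)\<^sup>2)])"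

text \<open>Matrix of omega in the chart at chart coordinates u (omega(v,w) = v^T Omega w).\<close>

definition omega_mat :: "real \<Rightarrow> real \<Rightarrow> real \<Rightarrow> real^4 \<Rightarrow> real^4^4" where
  "omega_mat R1 R2 e1 u =
     (let a = - e1 * R1 / sqrt (1 - (u$1)\<^sup>2 - (u$2)\<^sup>2);
          b = - R2 / (1 - (u$3)\<^sup>2 - (u$4)\<^sup>2)
      in \<chi> i j. if i = 1 \<and> j = 2 then a else if i = 2 \<and> j = 1 then - a
                else if i = 3 \<and> j = 4 then b else if i = 4 \<and> j = 3 then - b else 0)"

definition pd :: "4 \<Rightarrow> (real^4 \<Rightarrow> real) \<Rightarrow> real^4 \<Rightarrow> real" where
  "pd i f u = deriv (\<lambda>s. f (u + s *\<^sub>R axis i 1)) 0"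

definition hessian :: "(real^4 \<Rightarrow> real) \<Rightarrow> real^4 \<Rightarrow> real^4^4" where
  "hessian f u = (\<chi> i j. pd i (pd j f) u)"

definition comm :: "real^4^4 \<Rightarrow> real^4^4 \<Rightarrow> real^4^4" where
  "comm A B = A ** B - B ** A"

definition sp :: "real^4^4 \<Rightarrow> (real^4^4) set" where
  "sp \<Omega> = {A. transpose A ** \<Omega> + \<Omega> ** A = 0}"

fun lcs :: "(real^4^4) set \<Rightarrow> nat \<Rightarrow> (real^4^4) set" where
  "lcs h 0 = h"
| "lcs h (Suc n) = span {comm A B | A B. A \<in> h \<and> B \<in> lcs h n}"

definition nilpotent_lie :: "(real^4^4) set \<Rightarrow> bool" where
  "nilpotent_lie h \<longleftrightarrow> (\<exists>n. lcs h n = {0})"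

definition cartan_subalgebra :: "real^4^4 \<Rightarrow> (real^4^4) set \<Rightarrow> bool" where
  "cartan_subalgebra \<Omega> h \<longleftrightarrow>
     subspace h \<and> h \<subseteq> sp \<Omega> \<and> (\<forall>A\<in>h. \<forall>B\<in>h. comm A B \<in> h)
     \<and> nilpotent_lie h \<and> {X \<in> sp \<Omega>. \<forall>A\<in>h. comm X A \<in> h} = h"

definition ceigs :: "real^4^4 \<Rightarrow> complex set" where
  "ceigs A = {\<mu>. \<exists>v :: complex^4. v \<noteq> 0 \<and>
       (\<chi> i j. complex_of_real (A $ i $ j)) *v v = \<mu> *s v}"

definition A_L :: "real \<Rightarrow> real \<Rightarrow> real \<Rightarrow> real \<Rightarrow> real^4^4" where
  "A_L R1 R2 e1 e2 = matrix_inv (omega_mat R1 R2 e1 0) ** hessian (Lfun R1 R2 \<circ> chart e1 e2) 0"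

definition A_H :: "real \<Rightarrow> real \<Rightarrow> real \<Rightarrow> real \<Rightarrow> real \<Rightarrow> real^4^4" where
  "A_H R1 R2 t e1 e2 = matrix_inv (omega_mat R1 R2 e1 0) ** hessian (Hfun t \<circ> chart e1 e2) 0"

definition nondegenerate_pole :: "real \<Rightarrow> real \<Rightarrow> real \<Rightarrow> real \<Rightarrow> real \<Rightarrow> bool" where
  "nondegenerate_pole R1 R2 t e1 e2 \<longleftrightarrow>
     cartan_subalgebra (omega_mat R1 R2 e1 0) (span {A_L R1 R2 e1 e2, A_H R1 R2 t e1 e2})"

definition elliptic_elliptic_pole :: "real \<Rightarrow> real \<Rightarrow> real \<Rightarrow> real \<Rightarrow> real \<Rightarrow> bool" where
  "elliptic_elliptic_pole R1 R2 t e1 e2 \<longleftrightarrow>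
     (\<exists>c1 c2 \<alpha> \<beta> :: real. \<alpha> \<noteq> \<beta> \<and> \<alpha> \<noteq> 0 \<and> \<beta> \<noteq> 0 \<and>
        ceigs (c1 *\<^sub>R A_L R1 R2 e1 e2 + c2 *\<^sub>R A_H R1 R2 t e1 e2)
          = {\<i> * \<alpha>, - \<i> * \<alpha>, \<i> * \<beta>, - \<i> * \<beta>}
        \<and> card {\<i> * complex_of_real \<alpha>, - \<i> * \<alpha>, \<i> * \<beta>, - \<i> * \<beta>} = 4)"

definition focus_focus_pole :: "real \<Rightarrow> real \<Rightarrow> real \<Rightarrow> real \<Rightarrow> real \<Rightarrow> bool" where
  "focus_focus_pole R1 R2 t e1 e2 \<longleftrightarrow>
     (\<exists>c1 c2 \<alpha> \<beta> :: real. \<alpha> \<noteq> 0 \<and> \<beta> \<noteq> 0 \<and>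
        ceigs (c1 *\<^sub>R A_L R1 R2 e1 e2 + c2 *\<^sub>R A_H R1 R2 t e1 e2)
          = {Complex \<alpha> \<beta>, Complex \<alpha> (-\<beta>), Complex (-\<alpha>) \<beta>, Complex (-\<alpha>) (-\<beta>)})"

definition t_minus :: "real \<Rightarrow> real \<Rightarrow> real" where
  "t_minus R1 R2 = R2 / (2 * R2 + R1 + 2 * sqrt (R1 * R2))"

definition t_plus :: "real \<Rightarrow> real \<Rightarrow> real" where
  "t_plus R1 R2 = R2 / (2 * R2 + R1 - 2 * sqrt (R1 * R2))"

end

theory Submission
  imports Defs
begin

text \<open>
  Evaluating \<open>dL\<close> on the projections of the vertical axis to the two tangent planes gives
  \<open>R\<^sub>1 (1 - z\<^sub>1\<^sup>2) = 0\<close> and \<open>R\<^sub>2 (1 - z\<^sub>2\<^sup>2) / z\<^sub>2 = 0\<close>, so the fixed points are among the four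
  double poles, and there \<open>dL\<close> and \<open>dH\<close> both vanish.

  In the chart at a pole, \<open>\<Omega>\<close> and both Hessians have \<open>2 \<times> 2\<close> blocks that are multiples
  of \<open>I\<close> or of the rotation \<open>J\<close>: \<open>A\<^sub>L = I \<otimes> J\<close> and \<open>A\<^sub>H = K \<otimes> J\<close> for a real
  \<open>2 \<times> 2\<close> matrix \<open>K\<close>. The span of \<open>I \<otimes> J\<close> and \<open>K \<otimes> J\<close> is abelian, and it is its own
  normalizer in \<open>sp(\<Omega>)\<close> exactly when \<open>K\<close> has two distinct eigenvalues; the eigenvalues of
  \<open>c\<^sub>1 A\<^sub>L + c\<^sub>2 A\<^sub>H\<close> are \<open>\<plusminus>\<i>\<close> times those of \<open>c\<^sub>1 I + c\<^sub>2 K\<close>. So the type of a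
  pole is the sign of the discriminant of \<open>K\<close>, a quadratic in \<open>t\<close> which is positive at three
  poles and at \<open>p\<^sub>-\<^sub>,\<^sub>-\<close> factors with roots \<open>t\<^sup>-\<close> and \<open>t\<^sup>+\<close>.
\<close>

section \<open>Fixed points\<close>

lemma DERIV_ln_abs:
  assumes "(x::real) \<noteq> 0"
  shows "DERIV (\<lambda>x. ln \<bar>x\<bar>) x :> 1 / x"
proof (cases "x > 0")
  case True
  show ?thesis
    by (rule has_field_derivative_transform_within_open[where S="{0<..}"])
       (use DERIV_ln_divide[OF True] True in auto)
next
  case False
  with assms have x: "x < 0" by simp
  have "DERIV (\<lambda>x. ln (- x)) x :> 1 / x"
    using x by (auto intro!: derivative_eq_intros simp: field_simps)
  then show ?thesis
    by (rule has_field_derivative_transform_within_open[where S="{..<0}"]) (use x in auto)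
qed

lemma DERIV_ln_abs_comp [derivative_intros]:
  "(g has_real_derivative g') (at x within S) \<Longrightarrow> g x \<noteq> 0 \<Longrightarrow>
   ((\<lambda>x. ln \<bar>g x\<bar>) has_real_derivative (g' / g x)) (at x within S)"
  using DERIV_chain2[OF DERIV_ln_abs] by (fastforce simp: field_simps)

lemma has_derivative_vec_nth [derivative_intros]:
  "(f has_derivative f') F \<Longrightarrow> ((\<lambda>x. f x $ i) has_derivative (\<lambda>h. f' h $ i)) F"
  by (rule bounded_linear.has_derivative[OF bounded_linear_vec_nth])

lemma critical_on_M_iff:
  "(f has_derivative D) (at p) \<Longrightarrow> critical_on_M f p \<longleftrightarrow> (\<forall>v\<in>tangent p. D v = 0)"
  unfolding critical_on_M_def using has_derivative_unique by blast

lemma has_derivative_Lfun: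
  assumes "snd p $ 3 \<noteq> 0"
  shows "(Lfun R1 R2 has_derivative (\<lambda>h. R1 * fst h $ 3 + R2 * (snd h $ 3 / snd p $ 3))) (at p)"
proof -
  have "((\<lambda>q. ln \<bar>snd q $ 3\<bar>) has_derivative (\<lambda>h. snd h $ 3 * (1 / snd p $ 3))) (at p)"
    by (rule DERIV_compose_FDERIV[where g="\<lambda>q. snd q $ 3", OF DERIV_ln_abs[OF assms]])
       (auto intro!: derivative_eq_intros)
  then show ?thesis
    unfolding Lfun_def[abs_def]
    by (intro has_derivative_add has_derivative_mult_right) (auto intro!: derivative_eq_intros)
qed

lemma has_derivative_Hfun:
  "(Hfun t has_derivative (\<lambda>h. (1 - t) * fst h $ 3 + t * (fst h \<bullet> snd p + fst p \<bullet> snd h))) (at p)"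
  unfolding Hfun_def[abs_def]
  by (auto intro!: derivative_eq_intros simp: algebra_simps inner_vec_def sum_3)

lemma inner_vec3: "(a::real^3) \<bullet> b = a$1 * b$1 + a$2 * b$2 + a$3 * b$3"
  by (simp add: inner_vec_def sum_3)

lemma pole_nth [simp]:
  "fst (pole e1 e2) $ 1 = 0" "fst (pole e1 e2) $ 2 = 0" "fst (pole e1 e2) $ 3 = e1"
  "snd (pole e1 e2) $ 1 = 0" "snd (pole e1 e2) $ 2 = 0" "snd (pole e1 e2) $ 3 = e2"
  by (simp_all add: pole_def)

lemma S2_iff: "v \<in> S2 \<longleftrightarrow> (v$1)\<^sup>2 + (v$2)\<^sup>2 + (v$3)\<^sup>2 = 1"
  by (simp add: S2_def norm_eq_1 inner_vec3 power2_eq_square)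

lemma S2_vertical:
  assumes "v \<in> S2" "(v$3)\<^sup>2 = 1"
  shows "v = vector [0, 0, v$3]"
proof -
  have "(v$1)\<^sup>2 + (v$2)\<^sup>2 = 0" using assms by (simp add: S2_iff)
  then have "v$1 = 0" "v$2 = 0" by (auto simp: sum_power2_eq_zero_iff)
  then show ?thesis by (simp add: vec_eq_iff forall_3)
qed

lemma fixed_point_imp_pole:
  assumes R: "0 < R1" "0 < R2" and fp: "fixed_point R1 R2 t p"
  shows "p \<in> {pole 1 1, pole 1 (-1), pole (-1) 1, pole (-1) (-1)}"
proof -
  obtain v1 v2 where p: "p = (v1, v2)" by (cases p)
  from fp have S2: "v1 \<in> S2" "v2 \<in> S2" and z: "v2 $ 3 \<noteq> 0"
    and "critical_on_M (Lfun R1 R2) p"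
    by (auto simp: fixed_point_def M_def p)
  then have dL: "\<And>h. h \<in> tangent p \<Longrightarrow> R1 * fst h $ 3 + R2 * (snd h $ 3 / v2 $ 3) = 0"
    using critical_on_M_iff[OF has_derivative_Lfun, of p R1 R2] z by (simp add: p)
  have unit: "v1 \<bullet> v1 = 1" "v2 \<bullet> v2 = 1" using S2 by (auto simp: S2_def norm_eq_1)
  define a where "a = axis 3 1 - (v1$3) *\<^sub>R v1"
  define b where "b = axis 3 1 - (v2$3) *\<^sub>R v2"
  have "(a, 0) \<in> tangent p" "(0, b) \<in> tangent p"
    using unit by (simp_all add: tangent_def p a_def b_def inner_diff_left inner_axis')
  from dL[OF this(1)] dL[OF this(2)] have "R1 * (1 - (v1$3)\<^sup>2) = 0" "R2 * (1 - (v2$3)\<^sup>2) / v2$3 = 0"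
    by (simp_all add: a_def b_def axis_def power2_eq_square)
  with R z have z1: "(v1$3)\<^sup>2 = 1" and z2: "(v2$3)\<^sup>2 = 1" by simp_all
  then have "p = pole (v1$3) (v2$3)"
    using S2_vertical[OF S2(1) z1] S2_vertical[OF S2(2) z2] by (simp add: pole_def p)
  then show ?thesis using z1 z2 by (auto simp: power2_eq_1_iff)
qed

lemma fixed_point_pole:
  assumes "e1 = 1 \<or> e1 = -1" "e2 = 1 \<or> e2 = -1"
  shows "fixed_point R1 R2 t (pole e1 e2)"
proof -
  have vertical: "fst h $ 3 = 0 \<and> snd h $ 3 = 0" if "h \<in> tangent (pole e1 e2)" for h
    using that assms by (auto simp: tangent_def pole_def inner_vec3)
  have "pole e1 e2 \<in> M" using assms by (auto simp: M_def S2_iff pole_def)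
  moreover have "critical_on_M (Lfun R1 R2) (pole e1 e2)"
    using assms vertical by (subst critical_on_M_iff[OF has_derivative_Lfun]) auto
  moreover have "critical_on_M (Hfun t) (pole e1 e2)"
    using vertical by (subst critical_on_M_iff[OF has_derivative_Hfun]) (simp add: inner_vec3)
  ultimately show ?thesis using assms by (auto simp: fixed_point_def)
qed

lemma fixed_points_eq_poles:
  assumes "0 < R1" "0 < R2"
  shows "{p. fixed_point R1 R2 t p} = {pole 1 1, pole 1 (-1), pole (-1) 1, pole (-1) (-1)}"
  using fixed_point_imp_pole[OF assms] fixed_point_pole by blast

section \<open>The linearisations at the poles\<close>

definition chart_domain :: "(real^4) set" where
  "chart_domain = {u. (u$1)\<^sup>2 + (u$2)\<^sup>2 < 1 \<and> (u$3)\<^sup>2 + (u$4)\<^sup>2 < 1}"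

lemma open_chart_domain: "open chart_domain"
  unfolding chart_domain_def by (intro open_Collect_conj open_Collect_less continuous_intros)

lemma zero_in_chart_domain: "0 \<in> chart_domain"
  by (simp add: chart_domain_def)

lemma chart_domain_D:
  "u \<in> chart_domain \<Longrightarrow> 0 < 1 - (u$1)\<^sup>2 - (u$2)\<^sup>2 \<and> 0 < 1 - (u$3)\<^sup>2 - (u$4)\<^sup>2"
  by (auto simp: chart_domain_def)

lemma pd_eqI: "((\<lambda>s. f (u + s *\<^sub>R axis i 1)) has_real_derivative D) (at 0) \<Longrightarrow> pd i f u = D"
  unfolding pd_def by (rule DERIV_imp_deriv)

lemma pd_pd_zero_eqI:
  assumes "\<And>u. u \<in> chart_domain \<Longrightarrow> pd j f u = g u"
    and "((\<lambda>s. g (s *\<^sub>R axis i 1)) has_real_derivative D) (at 0)"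
  shows "pd i (pd j f) 0 = D"
proof (rule pd_eqI)
  have "open ((\<lambda>s::real. s *\<^sub>R axis i (1::real)) -` chart_domain)"
    by (intro open_vimage open_chart_domain continuous_intros)
  then show "((\<lambda>s. pd j f (0 + s *\<^sub>R axis i 1)) has_real_derivative D) (at 0)"
    by (rule has_field_derivative_transform_within_open[OF assms(2)])
       (use zero_in_chart_domain assms(1) in auto)
qed

lemma pd_Lfun_chart:
  assumes "e2 \<noteq> 0" "u \<in> chart_domain"
  shows "pd 1 (Lfun R1 R2 \<circ> chart e1 e2) u = - R1 * e1 * u$1 / sqrt (1 - (u$1)\<^sup>2 - (u$2)\<^sup>2)"
    and "pd 2 (Lfun R1 R2 \<circ> chart e1 e2) u = - R1 * e1 * u$2 / sqrt (1 - (u$1)\<^sup>2 - (u$2)\<^sup>2)"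
    and "pd 3 (Lfun R1 R2 \<circ> chart e1 e2) u = - R2 * u$3 / (1 - (u$3)\<^sup>2 - (u$4)\<^sup>2)"
    and "pd 4 (Lfun R1 R2 \<circ> chart e1 e2) u = - R2 * u$4 / (1 - (u$3)\<^sup>2 - (u$4)\<^sup>2)"
  by (rule pd_eqI; insert chart_domain_D[OF assms(2)] assms(1);
      simp add: Lfun_def chart_def axis_def;
      auto intro!: derivative_eq_intros; simp add: field_simps)+

lemma pd_Hfun_chart:
  assumes "u \<in> chart_domain"
  shows "pd 1 (Hfun t \<circ> chart e1 e2) u =
      - (1 - t) * e1 * u$1 / sqrt (1 - (u$1)\<^sup>2 - (u$2)\<^sup>2)
      + t * (u$3 - e1 * e2 * u$1 * sqrt (1 - (u$3)\<^sup>2 - (u$4)\<^sup>2) / sqrt (1 - (u$1)\<^sup>2 - (u$2)\<^sup>2))"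
    and "pd 2 (Hfun t \<circ> chart e1 e2) u =
      - (1 - t) * e1 * u$2 / sqrt (1 - (u$1)\<^sup>2 - (u$2)\<^sup>2)
      + t * (u$4 - e1 * e2 * u$2 * sqrt (1 - (u$3)\<^sup>2 - (u$4)\<^sup>2) / sqrt (1 - (u$1)\<^sup>2 - (u$2)\<^sup>2))"
    and "pd 3 (Hfun t \<circ> chart e1 e2) u =
      t * (u$1 - e1 * e2 * u$3 * sqrt (1 - (u$1)\<^sup>2 - (u$2)\<^sup>2) / sqrt (1 - (u$3)\<^sup>2 - (u$4)\<^sup>2))"
    and "pd 4 (Hfun t \<circ> chart e1 e2) u =
      t * (u$2 - e1 * e2 * u$4 * sqrt (1 - (u$1)\<^sup>2 - (u$2)\<^sup>2) / sqrt (1 - (u$3)\<^sup>2 - (u$4)\<^sup>2))"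
  by (rule pd_eqI; insert chart_domain_D[OF assms]; simp add: Hfun_def chart_def axis_def;
      auto intro!: derivative_eq_intros; simp add: field_simps)+

text \<open>\<open>kron_id a b c d = K \<otimes> I\<close> and \<open>kron_rot a b c d = K \<otimes> J\<close> for \<open>K = [[a, b], [c, d]]\<close>
  and \<open>J = [[0, -1], [1, 0]]\<close>, in the chart coordinates \<open>(x\<^sub>1, y\<^sub>1, x\<^sub>2, y\<^sub>2)\<close>.\<close>

definition kron_id :: "real \<Rightarrow> real \<Rightarrow> real \<Rightarrow> real \<Rightarrow> real^4^4" where
  "kron_id a b c d = (\<chi> i j. if i = 1 then (if j = 1 then a else if j = 3 then b else 0)
     else if i = 2 then (if j = 2 then a else if j = 4 then b else 0)
     else if i = 3 then (if j = 1 then c else if j = 3 then d else 0)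
     else (if j = 2 then c else if j = 4 then d else 0))"

definition kron_rot :: "real \<Rightarrow> real \<Rightarrow> real \<Rightarrow> real \<Rightarrow> real^4^4" where
  "kron_rot a b c d = (\<chi> i j. if i = 1 then (if j = 2 then -a else if j = 4 then -b else 0)
     else if i = 2 then (if j = 1 then a else if j = 3 then b else 0)
     else if i = 3 then (if j = 2 then -c else if j = 4 then -d else 0)
     else (if j = 1 then c else if j = 3 then d else 0))"

lemma matrix_mult_nth_4:
  "(X ** Y) $ i $ j = X$i$1 * Y$1$j + X$i$2 * Y$2$j + X$i$3 * Y$3$j + X$i$4 * Y$4$j"
  for X Y :: "real^4^4"
  by (simp add: matrix_matrix_mult_def sum_4)

lemma kron_rot_mult_kron_id:
  "kron_rot a b c d ** kron_id p q r s
     = kron_rot (a * p + b * r) (a * q + b * s) (c * p + d * r) (c * q + d * s)"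
  by (simp add: kron_rot_def kron_id_def matrix_mult_nth_4 vec_eq_iff forall_4 algebra_simps)

lemma kron_id_0 [simp]: "kron_id 0 0 0 0 = 0"
  by (simp add: kron_id_def vec_eq_iff)

lemma kron_rot_add:
  "kron_rot a b c d + kron_rot p q r s = kron_rot (a + p) (b + q) (c + r) (d + s)"
  by (simp add: kron_rot_def vec_eq_iff forall_4)

lemma scaleR_kron_rot: "x *\<^sub>R kron_rot a b c d = kron_rot (x * a) (x * b) (x * c) (x * d)"
  by (simp add: kron_rot_def vec_eq_iff forall_4)

lemma kron_id_add_kron_rot_eq_kron_rot_iff:
  "kron_id p1 p2 p3 p4 + kron_rot q1 q2 q3 q4 = kron_rot a b c d \<longleftrightarrow>
     p1 = 0 \<and> p2 = 0 \<and> p3 = 0 \<and> p4 = 0 \<and> q1 = a \<and> q2 = b \<and> q3 = c \<and> q4 = d"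
  by (auto simp: kron_id_def kron_rot_def vec_eq_iff forall_4)

lemma kron_rot_eq_iff:
  "kron_rot a b c d = kron_rot a' b' c' d' \<longleftrightarrow> a = a' \<and> b = b' \<and> c = c' \<and> d = d'"
  by (auto simp: kron_rot_def vec_eq_iff forall_4)

lemma matrix_inv_unique:
  fixes A B :: "'a::comm_ring_1^'n^'n"
  assumes "A ** B = mat 1" "B ** A = mat 1"
  shows "matrix_inv A = B"
proof -
  have "\<exists>C. A ** C = mat 1 \<and> C ** A = mat 1" using assms by blast
  then have C: "A ** matrix_inv A = mat 1"
    unfolding matrix_inv_def
    by (rule someI_ex[where P="\<lambda>C. A ** C = mat 1 \<and> C ** A = mat 1", THEN conjunct1])
  have "matrix_inv A = (B ** A) ** matrix_inv A" using assms by (simp add: matrix_mul_lid)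
  also have "\<dots> = B" using C by (simp add: matrix_mul_assoc[symmetric] matrix_mul_rid)
  finally show ?thesis .
qed

lemma matrix_inv_kron_rot_diag:
  assumes "a \<noteq> 0" "d \<noteq> 0"
  shows "matrix_inv (kron_rot a 0 0 d) = kron_rot (- 1 / a) 0 0 (- 1 / d)"
  using assms
  by (intro matrix_inv_unique)
     (simp_all add: kron_rot_def mat_def matrix_mult_nth_4 vec_eq_iff forall_4)

lemma hessian_Lfun_chart:
  assumes "e2 \<noteq> 0"
  shows "hessian (Lfun R1 R2 \<circ> chart e1 e2) 0 = kron_id (- R1 * e1) 0 0 (- R2)"
  unfolding hessian_def kron_id_def vec_eq_iff forall_4
  by (simp; intro conjI; rule pd_pd_zero_eqI, erule pd_Lfun_chart[OF assms];
      auto intro!: derivative_eq_intros simp: axis_def)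

lemma hessian_Hfun_chart:
  "hessian (Hfun t \<circ> chart e1 e2) 0 = kron_id (- (1 - t) * e1 - t * e1 * e2) t t (- t * e1 * e2)"
  unfolding hessian_def kron_id_def vec_eq_iff forall_4
  by (simp; intro conjI; rule pd_pd_zero_eqI, erule pd_Hfun_chart;
      auto intro!: derivative_eq_intros simp: axis_def)

lemma omega_mat_0: "omega_mat R1 R2 e1 0 = kron_rot (e1 * R1) 0 0 R2"
  by (simp add: omega_mat_def kron_rot_def vec_eq_iff forall_4 Let_def)

lemma A_L_pole:
  assumes "e1 \<noteq> 0" "e2 \<noteq> 0" "R1 \<noteq> 0" "R2 \<noteq> 0"
  shows "A_L R1 R2 e1 e2 = kron_rot 1 0 0 1"
  using assms
  by (simp add: A_L_def omega_mat_0 matrix_inv_kron_rot_diag hessian_Lfun_chart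
      kron_rot_mult_kron_id)

lemma A_H_pole:
  assumes "e1 \<noteq> 0" "R1 \<noteq> 0" "R2 \<noteq> 0"
  shows "A_H R1 R2 t e1 e2
    = kron_rot ((1 - t + t * e2) / R1) (- t / (e1 * R1)) (- t / R2) (t * e1 * e2 / R2)"
  using assms
  by (simp add: A_H_def omega_mat_0 matrix_inv_kron_rot_diag hessian_Hfun_chart
      kron_rot_mult_kron_id)
     (simp add: kron_rot_eq_iff field_simps)

section \<open>Cartan subalgebras spanned by \<open>I \<otimes> J\<close> and \<open>K \<otimes> J\<close>\<close>

lemma in_span_pair_iff: "x \<in> span {A, B} \<longleftrightarrow> (\<exists>u v. x = u *\<^sub>R A + v *\<^sub>R B)"
proof
  assume "x \<in> span {A, B}"
  then obtain u where "x - u *\<^sub>R A \<in> span {B}" by (auto simp: span_breakdown_eq)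
  then obtain v where "x - u *\<^sub>R A = v *\<^sub>R B" by (auto simp: span_singleton)
  then show "\<exists>u v. x = u *\<^sub>R A + v *\<^sub>R B" by (metis diff_add_cancel add.commute)
qed (auto intro: span_add span_scale span_base)

lemma in_span_kron_rot_iff:
  "X \<in> span {kron_rot 1 0 0 1, kron_rot a b c d}
     \<longleftrightarrow> (\<exists>u v. X = kron_rot (u + v * a) (v * b) (v * c) (u + v * d))"
  unfolding in_span_pair_iff scaleR_kron_rot kron_rot_add by simp

lemma cartan_subalgebra_abelian_iff:
  assumes "subspace h" "h \<subseteq> sp \<Omega>" and abelian: "\<And>A B. A \<in> h \<Longrightarrow> B \<in> h \<Longrightarrow> comm A B = 0"
  shows "cartan_subalgebra \<Omega> h \<longleftrightarrow> (\<forall>X \<in> sp \<Omega>. (\<forall>A \<in> h. comm X A \<in> h) \<longrightarrow> X \<in> h)"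
proof -
  have "0 \<in> h" using assms(1) by (rule subspace_0)
  then have "{comm A B | A B. A \<in> h \<and> B \<in> lcs h 0} = {0}" using abelian by auto blast
  then have "nilpotent_lie h" unfolding nilpotent_lie_def by (intro exI[of _ 1]) simp
  then show ?thesis
    using assms \<open>0 \<in> h\<close> unfolding cartan_subalgebra_def by auto
qed

lemma kron_rot_in_sp: "w1 * b = w2 * c \<Longrightarrow> kron_rot a b c d \<in> sp (kron_rot w1 0 0 w2)"
  by (simp add: sp_def kron_rot_def transpose_def matrix_mult_nth_4 vec_eq_iff forall_4
      algebra_simps)

lemma comm_kron_rot_span:
  "comm (kron_rot (u + v * a) (v * b) (v * c) (u + v * d))
        (kron_rot (u' + v' * a) (v' * b) (v' * c) (u' + v' * d)) = 0"
  by (simp add: comm_def kron_rot_def matrix_mult_nth_4 vec_eq_iff forall_4 algebra_simps)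

lemma comm_kron_rot_id_imp_blocks:
  assumes "comm X (kron_rot 1 0 0 1) \<in> span {kron_rot 1 0 0 1, kron_rot a b c d}"
  shows "X = kron_id (X$1$1) (X$1$3) (X$3$1) (X$3$3) + kron_rot (X$2$1) (X$2$3) (X$4$1) (X$4$3)"
proof -
  from assms obtain u v
    where "comm X (kron_rot 1 0 0 1) = kron_rot (u + v * a) (v * b) (v * c) (u + v * d)"
    unfolding in_span_kron_rot_iff by blast
  then have "X$1$1 = X$2$2" "X$1$2 = - X$2$1" "X$1$3 = X$2$4" "X$1$4 = - X$2$3"
    "X$3$1 = X$4$2" "X$3$2 = - X$4$1" "X$3$3 = X$4$4" "X$3$4 = - X$4$3"
    by (simp_all add: vec_eq_iff forall_4 comm_def matrix_mult_nth_4 kron_rot_def; linarith)+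
  then show ?thesis by (simp add: kron_id_def kron_rot_def vec_eq_iff forall_4)
qed

lemma kron_blocks_in_sp_imp:
  assumes "kron_id p1 p2 p3 p4 + kron_rot q1 q2 q3 q4 \<in> sp (kron_rot w1 0 0 w2)"
  shows "w1 * p1 = 0 \<and> w2 * p4 = 0 \<and> w1 * p2 = - w2 * p3 \<and> w1 * q2 = w2 * q3"
proof -
  let ?X = "kron_id p1 p2 p3 p4 + kron_rot q1 q2 q3 q4"
  have "(transpose ?X ** kron_rot w1 0 0 w2 + kron_rot w1 0 0 w2 ** ?X) $ i $ j = 0" for i j
    using assms by (simp add: sp_def)
  from this[of 1 2] this[of 3 4] this[of 1 4] this[of 1 3] show ?thesis
    by (simp add: kron_id_def kron_rot_def transpose_def matrix_mult_nth_4)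
       (auto simp: algebra_simps)
qed

text \<open>For \<open>X = P \<otimes> I + Q \<otimes> J\<close> one has \<open>[X, K \<otimes> J] = [P, K] \<otimes> J - [Q, K] \<otimes> I\<close>, as
  \<open>J\<^sup>2 = -I\<close>; here \<open>P = [[0, p2], [p3, 0]]\<close>, which is all the symplectic condition leaves.\<close>

lemma comm_kron_blocks_kron_rot:
  "comm (kron_id 0 p2 p3 0 + kron_rot q1 q2 q3 q4) (kron_rot a b c d)
     = kron_id (b * q3 - q2 * c) (q2 * (a - d) + b * (q4 - q1))
         (c * (q1 - q4) + q3 * (d - a)) (q2 * c - b * q3)
       + kron_rot (p2 * c - b * p3) (p2 * (d - a)) (p3 * (a - d)) (p3 * b - c * p2)"
  by (simp add: comm_def kron_id_def kron_rot_def matrix_mult_nth_4 vec_eq_iff forall_4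
      algebra_simps)

lemma commutant_2x2:
  fixes a b c d q1 q2 q3 q4 :: real
  assumes disc: "(a - d)\<^sup>2 + 4 * b * c \<noteq> 0"
    and comm: "b * q3 - q2 * c = 0" "q2 * (a - d) + b * (q4 - q1) = 0"
      "c * (q1 - q4) + q3 * (d - a) = 0"
  shows "\<exists>\<alpha> \<beta>. q1 = \<alpha> + \<beta> * a \<and> q2 = \<beta> * b \<and> q3 = \<beta> * c \<and> q4 = \<alpha> + \<beta> * d"
proof (cases "b = 0")
  case True
  with disc have "a \<noteq> d" by simp
  define \<beta> where "\<beta> = (q1 - q4) / (a - d)"
  have "q1 - q4 = \<beta> * (a - d)" using \<open>a \<noteq> d\<close> by (simp add: \<beta>_def)
  moreover have "q3 = \<beta> * c"
  proof -
    have "q3 * (a - d) = \<beta> * c * (a - d)"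
      using comm(3) \<open>q1 - q4 = \<beta> * (a - d)\<close> by (simp add: algebra_simps)
    then show ?thesis using \<open>a \<noteq> d\<close> by simp
  qed
  ultimately have "q1 = (q4 - \<beta> * d) + \<beta> * a \<and> q2 = \<beta> * b \<and> q3 = \<beta> * c \<and> q4 = (q4 - \<beta> * d) + \<beta> * d"
    using comm(2) True \<open>a \<noteq> d\<close> by (simp add: algebra_simps)
  then show ?thesis by blast
next
  case False
  define \<beta> where "\<beta> = q2 / b"
  have "q2 = \<beta> * b" using False by (simp add: \<beta>_def)
  moreover have "q1 - q4 = \<beta> * (a - d)"
  proof -
    have "b * (q1 - q4) = b * (\<beta> * (a - d))"
      using comm(2) \<open>q2 = \<beta> * b\<close> by (simp add: algebra_simps)
    then show ?thesis using False by simp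
  qed
  moreover have "q3 = \<beta> * c"
  proof -
    have "b * q3 = b * (\<beta> * c)"
      using comm(1) \<open>q2 = \<beta> * b\<close> by (simp add: algebra_simps)
    then show ?thesis using False by simp
  qed
  ultimately have "q1 = (q4 - \<beta> * d) + \<beta> * a \<and> q2 = \<beta> * b \<and> q3 = \<beta> * c
      \<and> q4 = (q4 - \<beta> * d) + \<beta> * d"
    by (simp add: algebra_simps)
  then show ?thesis by blast
qed

text \<open>The hypotheses \<open>comm\<close> below say \<open>[P, K] = u I + v K\<close> for \<open>P = [[0, p2], [p3, 0]]\<close>;
  such a \<open>P \<noteq> 0\<close> exists exactly when the discriminant of \<open>K\<close> vanishes.\<close>

lemma offdiag_commutator_in_span_eq_0:
  fixes a b c d p2 p3 u v w1 w2 :: real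
  assumes "w2 \<noteq> 0" "w1 * b = w2 * c" "w1 * p2 = - w2 * p3"
    and disc: "(a - d)\<^sup>2 + 4 * b * c \<noteq> 0"
    and comm: "p2 * c - b * p3 = u + v * a" "p2 * (d - a) = v * b" "p3 * (a - d) = v * c"
      "p3 * b - c * p2 = u + v * d"
  shows "p2 = 0 \<and> p3 = 0"
proof -
  have "w2 * p2 * ((a - d)\<^sup>2 + 4 * b * c) = 0"
    using assms(2,3) comm by algebra
  with disc \<open>w2 \<noteq> 0\<close> have "p2 = 0" by simp
  with assms(1,3) show ?thesis by simp
qed

lemma offdiag_commutator_in_span_degenerate:
  fixes a b c d w1 w2 :: real
  assumes "w2 \<noteq> 0" "w1 * b = w2 * c" and disc: "(a - d)\<^sup>2 + 4 * b * c = 0"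
  shows "\<exists>u v. w2 * c + b * w1 = u + v * a \<and> w2 * (d - a) = v * b \<and> - w1 * (a - d) = v * c
    \<and> - w1 * b - c * w2 = u + v * d"
proof (cases "b = 0")
  case True
  with assms have "c = 0" "a = d" by simp_all
  with True show ?thesis by (intro exI[of _ 0]) simp
next
  case False
  define v where "v = w2 * (d - a) / b"
  have vb: "v * b = w2 * (d - a)" using False by (simp add: v_def)
  have vc: "v * c = w1 * (d - a)"
  proof -
    have "w2 * (v * c) = w2 * (w1 * (d - a))"
      using vb assms(2) by (metis mult.commute mult.left_commute)
    then show ?thesis using assms(1) by simp
  qed
  have "b * (v * (a - d)) = b * (4 * w1 * b)"
    using vb assms(2) disc by algebra
  then have "v * (a - d) = 4 * w1 * b" using False by simp
  with vb vc assms(2) have "w2 * c + b * w1 = - v * (a + d) / 2 + v * a \<and> w2 * (d - a) = v * b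
      \<and> - w1 * (a - d) = v * c \<and> - w1 * b - c * w2 = - v * (a + d) / 2 + v * d"
    by (simp add: field_simps)
  then show ?thesis by blast
qed

lemma normalizer_kron_rot_span:
  fixes a b c d w1 w2 :: real
  defines "h \<equiv> span {kron_rot 1 0 0 1, kron_rot a b c d}"
  assumes "w1 \<noteq> 0" "w2 \<noteq> 0" "w1 * b = w2 * c" and disc: "(a - d)\<^sup>2 + 4 * b * c \<noteq> 0"
    and X: "X \<in> sp (kron_rot w1 0 0 w2)" "\<forall>A \<in> h. comm X A \<in> h"
  shows "X \<in> h"
proof -
  have "comm X (kron_rot 1 0 0 1) \<in> h" using X(2) by (simp add: h_def span_base)
  then obtain p1 p2 p3 p4 q1 q2 q3 q4
    where X_blocks: "X = kron_id p1 p2 p3 p4 + kron_rot q1 q2 q3 q4"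
    unfolding h_def by (blast dest: comm_kron_rot_id_imp_blocks)
  with X(1) assms(2,3) have "p1 = 0" "p4 = 0" and p: "w1 * p2 = - w2 * p3"
    by (auto dest: kron_blocks_in_sp_imp)
  with X_blocks have X_eq: "X = kron_id 0 p2 p3 0 + kron_rot q1 q2 q3 q4" by simp
  have "comm X (kron_rot a b c d) \<in> h" using X(2) by (simp add: h_def span_base)
  then obtain u v
    where "comm X (kron_rot a b c d) = kron_rot (u + v * a) (v * b) (v * c) (u + v * d)"
    unfolding h_def in_span_kron_rot_iff by (elim exE)
  then have comm_Q: "b * q3 - q2 * c = 0" "q2 * (a - d) + b * (q4 - q1) = 0"
      "c * (q1 - q4) + q3 * (d - a) = 0"
    and comm_P: "p2 * c - b * p3 = u + v * a" "p2 * (d - a) = v * b" "p3 * (a - d) = v * c"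
      "p3 * b - c * p2 = u + v * d"
    unfolding X_eq comm_kron_blocks_kron_rot kron_id_add_kron_rot_eq_kron_rot_iff by blast+
  have "p2 = 0 \<and> p3 = 0"
    using offdiag_commutator_in_span_eq_0[OF assms(3,4) p disc comm_P] .
  moreover obtain \<alpha> \<beta> where "q1 = \<alpha> + \<beta> * a" "q2 = \<beta> * b" "q3 = \<beta> * c" "q4 = \<alpha> + \<beta> * d"
    using commutant_2x2[OF disc comm_Q] by blast
  ultimately have "X = kron_rot (\<alpha> + \<beta> * a) (\<beta> * b) (\<beta> * c) (\<alpha> + \<beta> * d)"
    using X_eq by simp
  then show ?thesis unfolding h_def in_span_kron_rot_iff by blast
qed

lemma degenerate_normalizer_kron_rot_span:
  fixes a b c d w1 w2 :: real
  defines "h \<equiv> span {kron_rot 1 0 0 1, kron_rot a b c d}"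
  assumes "w2 \<noteq> 0" "w1 * b = w2 * c" and disc: "(a - d)\<^sup>2 + 4 * b * c = 0"
  defines "X \<equiv> kron_id 0 w2 (- w1) 0 + kron_rot 0 0 0 0"
  shows "X \<in> sp (kron_rot w1 0 0 w2)" "\<forall>A \<in> h. comm X A \<in> h" "X \<notin> h"
proof -
  show "X \<in> sp (kron_rot w1 0 0 w2)"
    by (simp add: X_def sp_def kron_id_def kron_rot_def transpose_def matrix_mult_nth_4
        vec_eq_iff forall_4)
  obtain u v where uv: "w2 * c + b * w1 = u + v * a" "w2 * (d - a) = v * b" "- w1 * (a - d) = v * c"
    "- w1 * b - c * w2 = u + v * d"
    using offdiag_commutator_in_span_degenerate[OF assms(2,3) disc] by blast
  show "\<forall>A \<in> h. comm X A \<in> h"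
  proof
    fix A assume "A \<in> h"
    then obtain \<alpha> \<beta> where A: "A = kron_rot (\<alpha> + \<beta> * a) (\<beta> * b) (\<beta> * c) (\<alpha> + \<beta> * d)"
      unfolding h_def in_span_kron_rot_iff by blast
    have "comm X A = kron_rot (\<beta> * u + \<beta> * v * a) (\<beta> * v * b) (\<beta> * v * c) (\<beta> * u + \<beta> * v * d)"
      unfolding X_def A comm_kron_blocks_kron_rot kron_id_add_kron_rot_eq_kron_rot_iff
      by (intro conjI) (use uv in algebra)+
    then show "comm X A \<in> h" unfolding h_def in_span_kron_rot_iff by blast
  qed
  show "X \<notin> h"
    unfolding h_def X_def in_span_kron_rot_iff kron_id_add_kron_rot_eq_kron_rot_iff
    using assms(2) by simp
qed

lemma cartan_subalgebra_kron_rot_iff: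
  fixes a b c d w1 w2 :: real
  assumes "w1 \<noteq> 0" "w2 \<noteq> 0" "w1 * b = w2 * c"
  shows "cartan_subalgebra (kron_rot w1 0 0 w2) (span {kron_rot 1 0 0 1, kron_rot a b c d})
    \<longleftrightarrow> (a - d)\<^sup>2 + 4 * b * c \<noteq> 0"
proof -
  let ?\<Omega> = "kron_rot w1 0 0 w2" and ?h = "span {kron_rot 1 0 0 1, kron_rot a b c d}"
  have "?h \<subseteq> sp ?\<Omega>"
  proof
    fix A assume "A \<in> ?h"
    then obtain u v where "A = kron_rot (u + v * a) (v * b) (v * c) (u + v * d)"
      unfolding in_span_kron_rot_iff by blast
    moreover have "w1 * (v * b) = w2 * (v * c)" using assms(3) by simp
    ultimately show "A \<in> sp ?\<Omega>" by (simp add: kron_rot_in_sp)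
  qed
  moreover have "comm A B = 0" if "A \<in> ?h" "B \<in> ?h" for A B
    using that unfolding in_span_kron_rot_iff by (auto simp: comm_kron_rot_span)
  ultimately have cartan_iff: "cartan_subalgebra ?\<Omega> ?h
      \<longleftrightarrow> (\<forall>X \<in> sp ?\<Omega>. (\<forall>A \<in> ?h. comm X A \<in> ?h) \<longrightarrow> X \<in> ?h)"
    by (rule cartan_subalgebra_abelian_iff[OF subspace_span])
  show ?thesis
  proof
    assume "cartan_subalgebra ?\<Omega> ?h"
    then show "(a - d)\<^sup>2 + 4 * b * c \<noteq> 0"
      using degenerate_normalizer_kron_rot_span[OF assms(2,3)] cartan_iff by blast
  next
    assume "(a - d)\<^sup>2 + 4 * b * c \<noteq> 0"
    then show "cartan_subalgebra ?\<Omega> ?h"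
      using normalizer_kron_rot_span[OF assms] cartan_iff by blast
  qed
qed

section \<open>Eigenvalues of \<open>K \<otimes> J\<close>\<close>

definition charpoly_2x2 :: "real \<Rightarrow> real \<Rightarrow> real \<Rightarrow> real \<Rightarrow> complex \<Rightarrow> complex" where
  "charpoly_2x2 a b c d x = (of_real a - x) * (of_real d - x) - of_real b * of_real c"

lemma kron_rot_eigen_iff:
  "(\<chi> i j. complex_of_real (kron_rot a b c d $ i $ j)) *v v = \<mu> *s v \<longleftrightarrow>
     - a * v$2 - b * v$4 = \<mu> * v$1 \<and> a * v$1 + b * v$3 = \<mu> * v$2 \<and>
     - c * v$2 - d * v$4 = \<mu> * v$3 \<and> c * v$1 + d * v$3 = \<mu> * v$4"
  by (simp add: kron_rot_def vec_eq_iff forall_4 matrix_vector_mult_def sum_4 eq_commute)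

lemma charpoly_2x2_kernel:
  assumes "(of_real a - x) * w1 + of_real b * w2 = 0" "of_real c * w1 + (of_real d - x) * w2 = 0"
  shows "charpoly_2x2 a b c d x * w1 = 0" "charpoly_2x2 a b c d x * w2 = 0"
  using assms unfolding charpoly_2x2_def by algebra+

lemma charpoly_2x2_root_kernel:
  assumes "charpoly_2x2 a b c d x = 0"
  obtains w1 w2 where "w1 \<noteq> 0 \<or> w2 \<noteq> 0"
    "(of_real a - x) * w1 + of_real b * w2 = 0" "of_real c * w1 + (of_real d - x) * w2 = 0"
proof -
  consider "b \<noteq> 0" | "c \<noteq> 0" | "b = 0" "c = 0" by blast
  then show ?thesis
  proof cases
    case 1
    with assms show ?thesis
      by (intro that[of "of_real b" "x - of_real a"]) (auto simp: charpoly_2x2_def algebra_simps)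
  next
    case 2
    with assms show ?thesis
      by (intro that[of "x - of_real d" "of_real c"]) (auto simp: charpoly_2x2_def algebra_simps)
  next
    case 3
    with assms have "x = of_real a \<or> x = of_real d" by (auto simp: charpoly_2x2_def)
    with 3 that[of 1 0] that[of 0 1] show ?thesis by auto
  qed
qed

text \<open>Pairing the coordinates of an eigenvector of \<open>K \<otimes> J\<close> as \<open>v1 + s v2, v3 + s v4\<close> with
  \<open>s\<^sup>2 = -1\<close> gives an eigenvector of \<open>K\<close> with eigenvalue \<open>- s \<mu>\<close>.\<close>

lemma kron_rot_eigenvector_pair:
  assumes "s * s = -1" "(\<chi> i j. complex_of_real (kron_rot a b c d $ i $ j)) *v v = \<mu> *s v"
  shows "(of_real a - (- s * \<mu>)) * (v$1 + s * v$2) + of_real b * (v$3 + s * v$4) = 0"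
    "of_real c * (v$1 + s * v$2) + (of_real d - (- s * \<mu>)) * (v$3 + s * v$4) = 0"
  using assms unfolding kron_rot_eigen_iff by algebra+

lemma ceigs_kron_rot:
  "ceigs (kron_rot a b c d) = {\<mu>. \<exists>x. charpoly_2x2 a b c d x = 0 \<and> (\<mu> = \<i> * x \<or> \<mu> = - \<i> * x)}"
proof (intro set_eqI iffI)
  fix \<mu> assume "\<mu> \<in> ceigs (kron_rot a b c d)"
  then obtain v :: "complex^4" where "v \<noteq> 0"
    and eig: "(\<chi> i j. complex_of_real (kron_rot a b c d $ i $ j)) *v v = \<mu> *s v"
    unfolding ceigs_def by blast
  obtain s where s: "s = \<i> \<or> s = - \<i>" and w: "v$1 + s * v$2 \<noteq> 0 \<or> v$3 + s * v$4 \<noteq> 0"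
  proof -
    have "v$1 + \<i> * v$2 \<noteq> 0 \<or> v$3 + \<i> * v$4 \<noteq> 0 \<or> v$1 - \<i> * v$2 \<noteq> 0 \<or> v$3 - \<i> * v$4 \<noteq> 0"
    proof (rule ccontr)
      assume "\<not> ?thesis"
      then have z: "v$1 + \<i> * v$2 = 0" "v$1 - \<i> * v$2 = 0" "v$3 + \<i> * v$4 = 0" "v$3 - \<i> * v$4 = 0"
        by blast+
      have "v$1 = ((v$1 + \<i> * v$2) + (v$1 - \<i> * v$2)) / 2"
        "v$2 = ((v$1 + \<i> * v$2) - (v$1 - \<i> * v$2)) / (2 * \<i>)"
        "v$3 = ((v$3 + \<i> * v$4) + (v$3 - \<i> * v$4)) / 2"
        "v$4 = ((v$3 + \<i> * v$4) - (v$3 - \<i> * v$4)) / (2 * \<i>)"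
        by (simp_all add: field_simps)
      then have "v$1 = 0" "v$2 = 0" "v$3 = 0" "v$4 = 0" unfolding z by simp_all
      with \<open>v \<noteq> 0\<close> show False by (simp add: vec_eq_iff forall_4)
    qed
    moreover have "v$1 - \<i> * v$2 = v$1 + - \<i> * v$2" "v$3 - \<i> * v$4 = v$3 + - \<i> * v$4" by simp_all
    ultimately show ?thesis using that[of \<i>] that[of "- \<i>"] by metis
  qed
  have "s * s = -1" using s by auto
  from charpoly_2x2_kernel[OF kron_rot_eigenvector_pair[OF this eig]] w
  have "charpoly_2x2 a b c d (- s * \<mu>) = 0" by auto
  moreover have "\<mu> = \<i> * (- s * \<mu>) \<or> \<mu> = - \<i> * (- s * \<mu>)" using s by auto
  ultimately show "\<mu> \<in> {\<mu>. \<exists>x. charpoly_2x2 a b c d x = 0 \<and> (\<mu> = \<i> * x \<or> \<mu> = - \<i> * x)}"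
    by blast
next
  fix \<mu> assume "\<mu> \<in> {\<mu>. \<exists>x. charpoly_2x2 a b c d x = 0 \<and> (\<mu> = \<i> * x \<or> \<mu> = - \<i> * x)}"
  then obtain x where root: "charpoly_2x2 a b c d x = 0" and \<mu>: "\<mu> = \<i> * x \<or> \<mu> = - \<i> * x"
    by blast
  obtain w1 w2 where w: "w1 \<noteq> 0 \<or> w2 \<noteq> 0"
    "(of_real a - x) * w1 + of_real b * w2 = 0" "of_real c * w1 + (of_real d - x) * w2 = 0"
    using charpoly_2x2_root_kernel[OF root] by blast
  define s :: complex where "s = (if \<mu> = - \<i> * x then \<i> else - \<i>)"
  have s: "s * s = -1" "\<mu> = - s * x" using \<mu> by (auto simp: s_def)
  define v :: "complex^4" where "v = vector [w1, s * w1, w2, s * w2]"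
  have v: "v$1 = w1" "v$2 = s * w1" "v$3 = w2" "v$4 = s * w2" by (simp_all add: v_def vector_def)
  then have "v \<noteq> 0" using w(1) by (auto simp: vec_eq_iff forall_4)
  moreover have "(\<chi> i j. complex_of_real (kron_rot a b c d $ i $ j)) *v v = \<mu> *s v"
    unfolding kron_rot_eigen_iff v using w(2,3) s by (intro conjI; algebra)
  ultimately show "\<mu> \<in> ceigs (kron_rot a b c d)" unfolding ceigs_def by blast
qed

lemma charpoly_2x2_expand:
  "charpoly_2x2 a b c d x = x * x - of_real (a + d) * x + of_real (a * d - b * c)"
  by (simp add: charpoly_2x2_def algebra_simps)

lemma ceigs_kron_rot_factored:
  assumes "\<And>x. charpoly_2x2 a b c d x = (x - r1) * (x - r2)"
  shows "ceigs (kron_rot a b c d) = {\<i> * r1, - \<i> * r1, \<i> * r2, - \<i> * r2}"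
  unfolding ceigs_kron_rot assms by auto

text \<open>The combination \<open>c1 I + 2 K\<close> moves the two real eigenvalues \<open>a + d \<plusminus> r\<close> of \<open>2 K\<close>
  to \<open>3 r\<close> and \<open>r\<close>, which are distinct, nonzero and not opposite.\<close>

lemma elliptic_combination_kron_rot:
  assumes "(a - d)\<^sup>2 + 4 * b * c > 0"
  shows "\<exists>c1 c2 \<alpha> \<beta> :: real. \<alpha> \<noteq> \<beta> \<and> \<alpha> \<noteq> 0 \<and> \<beta> \<noteq> 0 \<and>
    ceigs (c1 *\<^sub>R kron_rot 1 0 0 1 + c2 *\<^sub>R kron_rot a b c d) = {\<i> * \<alpha>, - \<i> * \<alpha>, \<i> * \<beta>, - \<i> * \<beta>}
    \<and> card {\<i> * complex_of_real \<alpha>, - \<i> * \<alpha>, \<i> * \<beta>, - \<i> * \<beta>} = 4"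
proof -
  define r where "r = sqrt ((a - d)\<^sup>2 + 4 * b * c)"
  have "r > 0" "r * r = (a - d)\<^sup>2 + 4 * b * c" using assms by (simp_all add: r_def)
  define c1 where "c1 = 2 * r - (a + d)"
  have trace: "(c1 + 2 * a) + (c1 + 2 * d) = 4 * r"
    and det: "(c1 + 2 * a) * (c1 + 2 * d) - 2 * b * (2 * c) = 3 * r * r"
    using \<open>r * r = _\<close> by (simp_all add: c1_def algebra_simps power2_eq_square)
  have "charpoly_2x2 (c1 + 2 * a) (2 * b) (2 * c) (c1 + 2 * d) x
      = (x - of_real (3 * r)) * (x - of_real r)" for x
    unfolding charpoly_2x2_expand trace det by (simp add: algebra_simps)
  then have "ceigs (c1 *\<^sub>R kron_rot 1 0 0 1 + 2 *\<^sub>R kron_rot a b c d)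
      = {\<i> * (3 * r), - \<i> * (3 * r), \<i> * r, - \<i> * r}"
    unfolding scaleR_kron_rot kron_rot_add by (simp add: ceigs_kron_rot_factored)
  moreover have "card {\<i> * complex_of_real (3 * r), - \<i> * (3 * r), \<i> * r, - \<i> * r} = 4"
    using \<open>r > 0\<close> by (simp add: complex_eq_iff)
  ultimately show ?thesis using \<open>r > 0\<close>
    by (intro exI[of _ c1] exI[of _ 2] exI[of _ "3 * r"] exI[of _ r]) simp
qed

text \<open>Here \<open>c1 I + 2 K\<close> has the eigenvalues \<open>2 \<plusminus> \<i> q\<close>.\<close>

lemma focus_combination_kron_rot:
  assumes "(a - d)\<^sup>2 + 4 * b * c < 0"
  shows "\<exists>c1 c2 \<alpha> \<beta> :: real. \<alpha> \<noteq> 0 \<and> \<beta> \<noteq> 0 \<and>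
    ceigs (c1 *\<^sub>R kron_rot 1 0 0 1 + c2 *\<^sub>R kron_rot a b c d)
      = {Complex \<alpha> \<beta>, Complex \<alpha> (-\<beta>), Complex (-\<alpha>) \<beta>, Complex (-\<alpha>) (-\<beta>)}"
proof -
  define q where "q = sqrt (- ((a - d)\<^sup>2 + 4 * b * c))"
  have "q > 0" "q * q = - ((a - d)\<^sup>2 + 4 * b * c)" using assms by (simp_all add: q_def)
  define c1 where "c1 = 2 - (a + d)"
  have trace: "(c1 + 2 * a) + (c1 + 2 * d) = 4"
    and det: "(c1 + 2 * a) * (c1 + 2 * d) - 2 * b * (2 * c) = 4 + q * q"
    using \<open>q * q = _\<close> by (simp_all add: c1_def algebra_simps power2_eq_square)
  have "charpoly_2x2 (c1 + 2 * a) (2 * b) (2 * c) (c1 + 2 * d) x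
      = (x - Complex 2 q) * (x - Complex 2 (- q))" for x
    unfolding charpoly_2x2_expand trace det by (simp add: algebra_simps complex_eq_iff)
  then have "ceigs (c1 *\<^sub>R kron_rot 1 0 0 1 + 2 *\<^sub>R kron_rot a b c d)
      = {Complex q 2, Complex q (-2), Complex (-q) 2, Complex (-q) (-2)}"
    unfolding scaleR_kron_rot kron_rot_add
    by (simp add: ceigs_kron_rot_factored) (auto simp: complex_eq_iff)
  then show ?thesis using \<open>q > 0\<close>
    by (intro exI[of _ c1] exI[of _ 2] exI[of _ q] exI[of _ 2]) simp
qed

section \<open>Classification of the poles\<close>

definition pole_discr :: "real \<Rightarrow> real \<Rightarrow> real \<Rightarrow> real \<Rightarrow> real \<Rightarrow> real" where
  "pole_discr R1 R2 t e1 e2 = ((1 - t + t * e2) * R2 - t * e1 * e2 * R1)\<^sup>2 + 4 * e1 * t\<^sup>2 * R1 * R2"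

lemma discr_A_H_pole:
  assumes "e1 = 1 \<or> e1 = -1" "0 < R1" "0 < R2"
  shows "((1 - t + t * e2) / R1 - t * e1 * e2 / R2)\<^sup>2 + 4 * (- t / (e1 * R1)) * (- t / R2)
    = pole_discr R1 R2 t e1 e2 / (R1 * R2)\<^sup>2"
  using assms by (auto simp: pole_discr_def field_simps power2_eq_square)

lemma
  assumes "e1 = 1 \<or> e1 = -1" "e2 = 1 \<or> e2 = -1" "0 < R1" "0 < R2"
  shows nondegenerate_pole_iff: "nondegenerate_pole R1 R2 t e1 e2 \<longleftrightarrow> pole_discr R1 R2 t e1 e2 \<noteq> 0"
    and elliptic_elliptic_pole_if:
      "pole_discr R1 R2 t e1 e2 > 0 \<Longrightarrow> elliptic_elliptic_pole R1 R2 t e1 e2"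
    and focus_focus_pole_if: "pole_discr R1 R2 t e1 e2 < 0 \<Longrightarrow> focus_focus_pole R1 R2 t e1 e2"
proof -
  have nz: "e1 \<noteq> 0" "e2 \<noteq> 0" "R1 \<noteq> 0" "R2 \<noteq> 0" "e1 * R1 \<noteq> 0" using assms by auto
  have scale: "(R1 * R2)\<^sup>2 > 0" using assms by simp
  note poles = A_L_pole[OF nz(1-4)] A_H_pole[OF nz(1,3,4)] omega_mat_0
  note discr = discr_A_H_pole[OF assms(1,3,4), of t e2]
  have "nondegenerate_pole R1 R2 t e1 e2 \<longleftrightarrow>
      ((1 - t + t * e2) / R1 - t * e1 * e2 / R2)\<^sup>2 + 4 * (- t / (e1 * R1)) * (- t / R2) \<noteq> 0"
    unfolding nondegenerate_pole_def poles using nz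
    by (intro cartan_subalgebra_kron_rot_iff) simp_all
  also have "\<dots> \<longleftrightarrow> pole_discr R1 R2 t e1 e2 \<noteq> 0"
    unfolding discr using scale by simp
  finally show "nondegenerate_pole R1 R2 t e1 e2 \<longleftrightarrow> pole_discr R1 R2 t e1 e2 \<noteq> 0" .
  show "elliptic_elliptic_pole R1 R2 t e1 e2" if "pole_discr R1 R2 t e1 e2 > 0"
    unfolding elliptic_elliptic_pole_def poles
    by (rule elliptic_combination_kron_rot) (use that scale in \<open>unfold discr, simp\<close>)
  show "focus_focus_pole R1 R2 t e1 e2" if "pole_discr R1 R2 t e1 e2 < 0"
    unfolding focus_focus_pole_def poles
    by (rule focus_combination_kron_rot)
       (use that scale in \<open>unfold discr, simp add: divide_neg_pos\<close>)
qed

lemma pole_discr_pos: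
  assumes "0 < R1" "R1 < R2" "0 \<le> t" "t \<le> 1" "(e1, e2) \<in> {(1, 1), (1, -1), (-1, 1)}"
  shows "0 < pole_discr R1 R2 t e1 e2"
proof (cases "e1 = 1")
  case True
  show ?thesis
  proof (cases "t = 0")
    case False
    then have "0 < 4 * t\<^sup>2 * R1 * R2" using assms by simp
    with True show ?thesis by (simp add: pole_discr_def add_nonneg_pos)
  qed (use assms in \<open>simp add: pole_discr_def\<close>)
next
  case False
  with assms(5) have e: "e1 = -1" "e2 = 1" by auto
  have "t * R1 \<le> R1" using assms by (intro mult_left_le_one_le) auto
  with assms have "t * R1 < R2" by linarith
  then have "0 < (R2 - t * R1)\<^sup>2" by simp
  moreover have "0 \<le> 4 * t * (1 - t) * R1 * R2" using assms by simp
  moreover have "pole_discr R1 R2 t e1 e2 = (R2 - t * R1)\<^sup>2 + 4 * t * (1 - t) * R1 * R2"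
    by (simp add: pole_discr_def e power2_eq_square algebra_simps)
  ultimately show ?thesis by linarith
qed

lemma pole_discr_south_factor:
  assumes "0 \<le> R1 * R2"
  shows "pole_discr R1 R2 t (-1) (-1)
    = (R2 - t * (2 * R2 + R1 + 2 * sqrt (R1 * R2))) * (R2 - t * (2 * R2 + R1 - 2 * sqrt (R1 * R2)))"
proof -
  have "sqrt (R1 * R2) * sqrt (R1 * R2) = R1 * R2" using assms by simp
  then show ?thesis by (simp add: pole_discr_def power2_eq_square algebra_simps)
qed

lemma pole_discr_south_sign:
  assumes "0 < R1" "R1 < R2"
  shows "t < t_minus R1 R2 \<or> t > t_plus R1 R2 \<Longrightarrow> pole_discr R1 R2 t (-1) (-1) > 0"
    and "t_minus R1 R2 < t \<and> t < t_plus R1 R2 \<Longrightarrow> pole_discr R1 R2 t (-1) (-1) < 0"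
    and "t = t_minus R1 R2 \<or> t = t_plus R1 R2 \<Longrightarrow> pole_discr R1 R2 t (-1) (-1) = 0"
proof -
  define s where "s = sqrt (R1 * R2)"
  define den_minus den_plus
    where "den_minus = 2 * R2 + R1 + 2 * s" and "den_plus = 2 * R2 + R1 - 2 * s"
  have "0 < s" using assms by (simp add: s_def)
  have "2 * s \<le> R1 + R2"
    using arith_geo_mean_sqrt[of R1 R2] assms by (simp add: s_def)
  then have "0 < den_plus" "den_plus < den_minus"
    using assms \<open>0 < s\<close> by (simp_all add: den_minus_def den_plus_def)
  have tm: "t_minus R1 R2 = R2 / den_minus" and tp: "t_plus R1 R2 = R2 / den_plus"
    by (simp_all add: t_minus_def t_plus_def den_minus_def den_plus_def s_def)
  have factor: "pole_discr R1 R2 t (-1) (-1) = (R2 - t * den_minus) * (R2 - t * den_plus)"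
    using pole_discr_south_factor assms by (simp add: den_minus_def den_plus_def s_def)
  have "t < t_minus R1 R2 \<longleftrightarrow> 0 < R2 - t * den_minus"
    "t_minus R1 R2 < t \<longleftrightarrow> R2 - t * den_minus < 0"
    "t = t_minus R1 R2 \<longleftrightarrow> R2 - t * den_minus = 0"
    using \<open>0 < den_plus\<close> \<open>den_plus < den_minus\<close> by (auto simp: tm field_simps)
  moreover have "t < t_plus R1 R2 \<longleftrightarrow> 0 < R2 - t * den_plus"
    "t_plus R1 R2 < t \<longleftrightarrow> R2 - t * den_plus < 0"
    "t = t_plus R1 R2 \<longleftrightarrow> R2 - t * den_plus = 0"
    using \<open>0 < den_plus\<close> by (auto simp: tp field_simps)
  moreover have "t_minus R1 R2 < t_plus R1 R2"
    unfolding tm tp using assms \<open>0 < den_plus\<close> \<open>den_plus < den_minus\<close> by (simp add: frac_less2)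
  ultimately show "t < t_minus R1 R2 \<or> t > t_plus R1 R2 \<Longrightarrow> pole_discr R1 R2 t (-1) (-1) > 0"
    and "t_minus R1 R2 < t \<and> t < t_plus R1 R2 \<Longrightarrow> pole_discr R1 R2 t (-1) (-1) < 0"
    and "t = t_minus R1 R2 \<or> t = t_plus R1 R2 \<Longrightarrow> pole_discr R1 R2 t (-1) (-1) = 0"
    unfolding factor by (auto simp: mult_pos_pos mult_neg_neg mult_neg_pos)
qed

lemma nondegenerate_elliptic_elliptic_pole:
  assumes "0 < R1" "R1 < R2" "0 \<le> t" "t \<le> 1" "(e1, e2) \<in> {(1, 1), (1, -1), (-1, 1)}"
  shows "nondegenerate_pole R1 R2 t e1 e2 \<and> elliptic_elliptic_pole R1 R2 t e1 e2"
proof -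
  have "e1 = 1 \<or> e1 = -1" "e2 = 1 \<or> e2 = -1" "0 < R2" using assms by auto
  with pole_discr_pos[OF assms] assms(1) show ?thesis
    by (simp add: nondegenerate_pole_iff elliptic_elliptic_pole_if)
qed

lemma south_pole_type:
  assumes "0 < R1" "R1 < R2"
  shows "t < t_minus R1 R2 \<or> t > t_plus R1 R2 \<Longrightarrow>
      nondegenerate_pole R1 R2 t (-1) (-1) \<and> elliptic_elliptic_pole R1 R2 t (-1) (-1)"
    and "t_minus R1 R2 < t \<and> t < t_plus R1 R2 \<Longrightarrow>
      nondegenerate_pole R1 R2 t (-1) (-1) \<and> focus_focus_pole R1 R2 t (-1) (-1)"
    and "t = t_minus R1 R2 \<or> t = t_plus R1 R2 \<Longrightarrow> \<not> nondegenerate_pole R1 R2 t (-1) (-1)"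
proof -
  have "0 < R2" using assms by simp
  note classify = nondegenerate_pole_iff elliptic_elliptic_pole_if focus_focus_pole_if
  note type = classify[of "-1" "-1" R1 R2 t, OF _ _ assms(1) \<open>0 < R2\<close>, simplified]
  show "t < t_minus R1 R2 \<or> t > t_plus R1 R2 \<Longrightarrow>
      nondegenerate_pole R1 R2 t (-1) (-1) \<and> elliptic_elliptic_pole R1 R2 t (-1) (-1)"
    and "t_minus R1 R2 < t \<and> t < t_plus R1 R2 \<Longrightarrow>
      nondegenerate_pole R1 R2 t (-1) (-1) \<and> focus_focus_pole R1 R2 t (-1) (-1)"
    and "t = t_minus R1 R2 \<or> t = t_plus R1 R2 \<Longrightarrow> \<not> nondegenerate_pole R1 R2 t (-1) (-1)"
    using pole_discr_south_sign[OF assms, of t] type by auto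
qed

theorem proposition5p8:
  fixes R1 R2 t :: real
  assumes "0 < R1" and "R1 < R2" and "0 \<le> t" and "t \<le> 1"
  shows "{p. fixed_point R1 R2 t p} = {pole 1 1, pole 1 (-1), pole (-1) 1, pole (-1) (-1)}
    \<and> (\<forall>(e1, e2) \<in> {(1, 1), (1, -1), (-1, 1)}.
          nondegenerate_pole R1 R2 t e1 e2 \<and> elliptic_elliptic_pole R1 R2 t e1 e2)
    \<and> ((t < t_minus R1 R2 \<or> t > t_plus R1 R2) \<longrightarrow>
          nondegenerate_pole R1 R2 t (-1) (-1) \<and> elliptic_elliptic_pole R1 R2 t (-1) (-1))
    \<and> ((t_minus R1 R2 < t \<and> t < t_plus R1 R2) \<longrightarrow>
          nondegenerate_pole R1 R2 t (-1) (-1) \<and> focus_focus_pole R1 R2 t (-1) (-1))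
    \<and> ((t = t_minus R1 R2 \<or> t = t_plus R1 R2) \<longrightarrow> \<not> nondegenerate_pole R1 R2 t (-1) (-1))"
proof (intro conjI impI)
  show "{p. fixed_point R1 R2 t p} = {pole 1 1, pole 1 (-1), pole (-1) 1, pole (-1) (-1)}"
    using assms by (intro fixed_points_eq_poles) auto
  show "\<forall>(e1, e2) \<in> {(1, 1), (1, -1), (-1, 1)}.
      nondegenerate_pole R1 R2 t e1 e2 \<and> elliptic_elliptic_pole R1 R2 t e1 e2"
    using nondegenerate_elliptic_elliptic_pole[OF assms] by blast
qed (use south_pole_type[OF assms(1,2), of t] in blast)+

end
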